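(* Let $q$ be an indeterminate, $T(x)=A(x)+qD(x)=\sum_iT^{(i)}x^i$ and $T'(x)=A'(x)+qD'(x)=\sum_iT'^{(i)}x^i$, acting on $\mathbb{V}_N[q]$. Then $T^{(i)}T^{(j)}=T^{(j)}T^{(i)}$ and $T'^{(i)}T'^{(j)}=T'^{(j)}T'^{(i)}$ for all $i,j\ge0$.
   Context: Fix $N\ge2$. $V=\mathbb{C}^2$ with basis $v_0,v_1$, ${\bf P}=\mathbb{C}[t_1,\dots,t_N]$, $\mathbb{V}_N=V^{\otimes N}\otimes{\bf P}$. With matrices on $V\otimes V$ in the ordered basis $v_0\otimes v_0,v_0\otimes v_1,v_1\otimes v_0,v_1\otimes v_1$ (columns = images), $L(x,t)=\begin{pmatrix}1&0&0&0\\0&x+t&1&0\\0&1&0&0\\0&0&0&1\end{pmatrix}$, $L'(x,t)=\begin{pmatrix}x-t&0&0&0\\0&1&1&0\\0&1&1&0\\0&0&0&0\end{pmatrix}$. On $V[x]\otimes\mathbb{V}_N$ (factors $0,\dots,N$) let $M(x)=L_{0N}(x,t_N)\cdots L_{01}(x,t_1)$ with $L_{0j}(x,t_j)$ acting on factors $0,j$ (factor $0$ first). Define $A(x),B(x),C(x),D(x)$ by $M(x)(v_0\otimes w)=v_0\otimes A(x)w+v_1\otimes C(x)w$, $M(x)(v_1\otimes w)=v_0\otimes B(x)w+v_1\otimes D(x)w$; $A'(x),\dots,D'(x)$ are defined in the same way from $L'$. *)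

theory Defs
  imports "Jordan_Normal_Form.Matrix" "HOL-Computational_Algebra.Polynomial"
begin

text \<open>Basis of V = C^2: v_0 is False, v_1 is True.  The ordered basis of V (x) V
  v0v0, v0v1, v1v0, v1v1 is indexed by 0,1,2,3 (first factor = auxiliary space 0).\<close>

definition idx2 :: "bool \<Rightarrow> bool \<Rightarrow> nat" where
  "idx2 a c = 2 * of_bool a + of_bool c"

text \<open>The R-matrices as 4x4 matrices with entries polynomial in x (columns = images).
  The spectral parameter x is the polynomial variable; t is a scalar (constant polynomial).\<close>

definition L_mat :: "'a::comm_ring_1 \<Rightarrow> 'a poly mat" where
  "L_mat t = mat_of_rows_list 4
     [[1, 0, 0, 0],
      [0, [:0,1:] + [:t:], 1, 0],
      [0, 1, 0, 0],
      [0, 0, 0, 1]]"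

definition L'_mat :: "'a::comm_ring_1 \<Rightarrow> 'a poly mat" where
  "L'_mat t = mat_of_rows_list 4
     [[[:0,1:] - [:t:], 0, 0, 0],
      [0, 1, 1, 0],
      [0, 1, 1, 0],
      [0, 0, 0, 0]]"

text \<open>Matrix entry of the monodromy  M(x) = L_{0N}(x,t_N) ... L_{01}(x,t_1):
  mono R ts a cs b ds = coefficient of  v_a (x) v_cs  in  M(x)(v_b (x) v_ds),
  where ts = [t_1,...,t_N] and cs, ds are bool lists [s_1,...,s_N].
  L_{01} is applied first, then the remaining product acts on the new auxiliary state.\<close>

fun mono :: "('a::comm_ring_1 \<Rightarrow> 'a poly mat) \<Rightarrow> 'a list \<Rightarrow> bool \<Rightarrow> bool list \<Rightarrow> bool \<Rightarrow> bool list \<Rightarrow> 'a poly" where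
  "mono R [] a [] b [] = (if a = b then 1 else 0)"
| "mono R (t # ts) a (c # cs) b (d # ds) =
     (\<Sum>e\<in>(UNIV::bool set). mono R ts a cs e ds * (R t $$ (idx2 e c, idx2 b d)))"
| "mono R _ _ _ _ _ = 0"

text \<open>Basis of V^{(x)N}: index k < 2^N corresponds to v_{s_1} (x) ... (x) v_{s_N}
  with s_j = bit (j-1) of k.\<close>

definition state :: "nat \<Rightarrow> nat \<Rightarrow> bool list" where
  "state N k = map (\<lambda>j. bit k j) [0..<N]"

text \<open>The operators A(x), D(x) (from L) as 2^N x 2^N matrices over 'a[x]:
  M(x)(v_0 (x) w) = v_0 (x) A(x) w + ...,  M(x)(v_1 (x) w) = ... + v_1 (x) D(x) w.\<close>

definition opA :: "('a::comm_ring_1 \<Rightarrow> 'a poly mat) \<Rightarrow> 'a list \<Rightarrow> 'a poly mat" where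
  "opA R ts = mat (2 ^ length ts) (2 ^ length ts)
     (\<lambda>(r, c). mono R ts False (state (length ts) r) False (state (length ts) c))"

definition opD :: "('a::comm_ring_1 \<Rightarrow> 'a poly mat) \<Rightarrow> 'a list \<Rightarrow> 'a poly mat" where
  "opD R ts = mat (2 ^ length ts) (2 ^ length ts)
     (\<lambda>(r, c). mono R ts True (state (length ts) r) True (state (length ts) c))"

definition transfer :: "('a::comm_ring_1 \<Rightarrow> 'a poly mat) \<Rightarrow> 'a \<Rightarrow> 'a list \<Rightarrow> 'a poly mat" where
  "transfer R q ts = opA R ts + [:q:] \<cdot>\<^sub>m opD R ts"

definition transfer_coeff :: "('a::comm_ring_1 \<Rightarrow> 'a poly mat) \<Rightarrow> 'a \<Rightarrow> 'a list \<Rightarrow> nat \<Rightarrow> 'a mat" where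
  "transfer_coeff R q ts i = map_mat (\<lambda>p. coeff p i) (transfer R q ts)"

end

theory Submission
  imports Defs
begin

(* The Lax operators satisfy an RLL relation: a transvection R = 1 + (x - y) E, resp.
   1 + (y - x) E, between the two one-magnon states of the doubled auxiliary space
   intertwines L(x) L(y) with L(y) L(x). By the train argument R then conjugates the
   monodromy of the doubled chain M(x) M(y) into M(y) M(x).  Since R preserves the number
   of v_1 components it commutes with the twist diag(1, q) (x) diag(1, q), so the twisted
   traces agree: T(x) T(y) = T(y) T(x) as matrices over the two-variable ring 'a[x][y].
   Comparing the coefficients of x^i y^j gives T^(i) T^(j) = T^(j) T^(i). *)

section \<open>Sums over words\<close>

lemma sum_UNIV_prod: "(\<Sum>p\<in>UNIV. g p) = (\<Sum>a\<in>UNIV. \<Sum>b\<in>UNIV. g (a, b))"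
  by (simp add: sum.cartesian_product flip: UNIV_Times_UNIV)

fun sum_words :: "nat \<Rightarrow> ('c::finite list \<Rightarrow> 'r::comm_monoid_add) \<Rightarrow> 'r" where
  "sum_words 0 g = g []"
| "sum_words (Suc n) g = (\<Sum>c\<in>UNIV. sum_words n (\<lambda>w. g (c # w)))"

lemma sum_words_sum: "sum_words n (\<lambda>w. \<Sum>i\<in>A. f i w) = (\<Sum>i\<in>A. sum_words n (f i))"
  by (induction n arbitrary: f) (simp_all add: sum.swap[of _ UNIV])

lemma sum_words_zero [simp]: "sum_words n (\<lambda>w. 0) = 0"
  by (induction n) simp_all

lemma sum_words_mult_left: "sum_words n (\<lambda>w. a * f w) = a * sum_words n f"
  for a :: "'r::semiring_0"
  by (induction n arbitrary: f) (simp_all add: sum_distrib_left)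

lemma sum_words_mult_right: "sum_words n (\<lambda>w. f w * a) = sum_words n f * a"
  for a :: "'r::semiring_0"
  by (induction n arbitrary: f) (simp_all add: sum_distrib_right)

lemma sum_even_odd: "(\<Sum>k<2 * n. f k) = (\<Sum>m<n. f (2 * m) + f (2 * m + 1))"
  for f :: "nat \<Rightarrow> 'a::comm_monoid_add"
  by (induction n) (simp_all add: add_ac)

lemma state_Suc: "state (Suc N) k = odd k # state N (k div 2)"
  unfolding state_def
  by (simp add: upt_conv_Cons map_Suc_upt[symmetric] bit_0 bit_Suc del: upt_Suc)

lemma sum_state_eq_sum_words: "(\<Sum>k<2 ^ N. g (state N k)) = sum_words N g"
proof (induction N arbitrary: g)
  case 0
  then show ?case by (simp add: state_def)
next
  case (Suc N)
  have "(\<Sum>k<2 ^ Suc N. g (state (Suc N) k))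
      = (\<Sum>m<2 ^ N. g (False # state N m) + g (True # state N m))"
    by (simp add: sum_even_odd state_Suc)
  also have "\<dots> = sum_words (Suc N) g"
    by (simp add: sum.distrib Suc.IH[of "\<lambda>w. g (False # w)"] Suc.IH[of "\<lambda>w. g (True # w)"]
        UNIV_bool)
  finally show ?case .
qed

section \<open>Monodromy matrices and the train argument\<close>

fun monodromy ::
  "('t \<Rightarrow> 'b::finite \<Rightarrow> 'c \<Rightarrow> 'b \<Rightarrow> 'c \<Rightarrow> 'r::comm_ring_1)
     \<Rightarrow> 't list \<Rightarrow> 'b \<Rightarrow> 'c list \<Rightarrow> 'b \<Rightarrow> 'c list \<Rightarrow> 'r" where
  "monodromy W [] a [] b [] = (if a = b then 1 else 0)"
| "monodromy W (t # ts) a (c # cs) b (d # ds) =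
     (\<Sum>e\<in>UNIV. monodromy W ts a cs e ds * W t e c b d)"
| "monodromy W _ _ _ _ _ = 0"

lemma mono_eq_monodromy:
  "mono R ts a cs b ds = monodromy (\<lambda>t e c b d. R t $$ (idx2 e c, idx2 b d)) ts a cs b ds"
  by (induction R ts a cs b ds rule: mono.induct) simp_all

lemma monodromy_map:
  "monodromy W (map f ts) a cs b ds = monodromy (\<lambda>t. W (f t)) ts a cs b ds"
  by (induction "\<lambda>t. W (f t)" ts a cs b ds rule: monodromy.induct) simp_all

lemma (in comm_ring_hom) hom_monodromy:
  "hom (monodromy W ts a cs b ds) = monodromy (\<lambda>t e c b d. hom (W t e c b d)) ts a cs b ds"
  by (induction W ts a cs b ds rule: monodromy.induct) (simp_all add: hom_distribs)

definition fuse ::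
  "('t \<Rightarrow> 'b \<Rightarrow> 'c::finite \<Rightarrow> 'b \<Rightarrow> 'c \<Rightarrow> 'r::comm_ring_1) \<Rightarrow> ('t \<Rightarrow> 'b' \<Rightarrow> 'c \<Rightarrow> 'b' \<Rightarrow> 'c \<Rightarrow> 'r)
     \<Rightarrow> 't \<Rightarrow> 'b \<times> 'b' \<Rightarrow> 'c \<Rightarrow> 'b \<times> 'b' \<Rightarrow> 'c \<Rightarrow> 'r" where
  "fuse W V t p c p' d = (\<Sum>m\<in>UNIV. W t (fst p) c (fst p') m * V t (snd p) m (snd p') d)"

lemma monodromy_fuse:
  "sum_words (length ts) (\<lambda>ms. monodromy W ts a cs a' ms * monodromy V ts b ms b' ds)
     = monodromy (fuse W V) ts (a, b) cs (a', b') ds"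
proof (induction ts arbitrary: cs ds a' b')
  case Nil
  then show ?case by (cases cs; cases ds) simp_all
next
  case (Cons t ts)
  show ?case
  proof (cases cs; cases ds)
    fix c cs' d ds'
    assume cs: "cs = c # cs'" and ds: "ds = d # ds'"
    have "sum_words (length (t # ts))
            (\<lambda>ms. monodromy W (t # ts) a cs a' ms * monodromy V (t # ts) b ms b' ds)
        = (\<Sum>m\<in>UNIV. sum_words (length ts) (\<lambda>l. \<Sum>e\<in>UNIV. \<Sum>f\<in>UNIV.
             (monodromy W ts a cs' e l * monodromy V ts b l f ds') * (W t e c a' m * V t f m b' d)))"
      by (simp add: cs ds sum_product) (simp add: mult_ac)
    also have "\<dots> = (\<Sum>m\<in>UNIV. \<Sum>e\<in>UNIV. \<Sum>f\<in>UNIV. monodromy (fuse W V) ts (a, b) cs' (e, f) ds'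
                      * (W t e c a' m * V t f m b' d))"
      by (simp add: sum_words_sum sum_words_mult_right Cons.IH)
    also have "\<dots> = (\<Sum>e\<in>UNIV. \<Sum>f\<in>UNIV. \<Sum>m\<in>UNIV. monodromy (fuse W V) ts (a, b) cs' (e, f) ds'
                      * (W t e c a' m * V t f m b' d))"
      by (subst sum.swap) (rule sum.cong[OF refl], rule sum.swap)
    also have "\<dots> = (\<Sum>e\<in>UNIV. \<Sum>f\<in>UNIV. monodromy (fuse W V) ts (a, b) cs' (e, f) ds'
                      * fuse W V t (e, f) c (a', b') d)"
      by (simp only: fuse_def sum_distrib_left fst_conv snd_conv)
    also have "\<dots> = monodromy (fuse W V) (t # ts) (a, b) cs (a', b') ds"
      by (simp add: cs ds sum_UNIV_prod)
    finally show ?thesis .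
  qed simp_all
qed

definition twisted_transfer ::
  "('b::finite \<Rightarrow> 'r) \<Rightarrow> ('t \<Rightarrow> 'b \<Rightarrow> 'c \<Rightarrow> 'b \<Rightarrow> 'c \<Rightarrow> 'r::comm_ring_1)
     \<Rightarrow> 't list \<Rightarrow> 'c list \<Rightarrow> 'c list \<Rightarrow> 'r" where
  "twisted_transfer \<theta> W ts cs ds = (\<Sum>a\<in>UNIV. \<theta> a * monodromy W ts a cs a ds)"

lemma (in comm_ring_hom) hom_twisted_transfer:
  "hom (twisted_transfer \<theta> W ts cs ds)
     = twisted_transfer (\<lambda>a. hom (\<theta> a)) (\<lambda>t e c b d. hom (W t e c b d)) ts cs ds"
  by (simp add: twisted_transfer_def hom_distribs hom_monodromy)

lemma twisted_transfer_mult: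
  "sum_words (length ts) (\<lambda>ms. twisted_transfer \<theta> W ts cs ms * twisted_transfer \<theta>' V ts ms ds)
     = twisted_transfer (\<lambda>p. \<theta> (fst p) * \<theta>' (snd p)) (fuse W V) ts cs ds"
proof -
  have "sum_words (length ts)
          (\<lambda>ms. twisted_transfer \<theta> W ts cs ms * twisted_transfer \<theta>' V ts ms ds)
      = sum_words (length ts) (\<lambda>ms. \<Sum>a\<in>UNIV. \<Sum>b\<in>UNIV.
          \<theta> a * \<theta>' b * (monodromy W ts a cs a ms * monodromy V ts b ms b ds))"
    by (simp add: twisted_transfer_def sum_product mult_ac)
  also have "\<dots> = (\<Sum>a\<in>UNIV. \<Sum>b\<in>UNIV. \<theta> a * \<theta>' b * monodromy (fuse W V) ts (a, b) cs (a, b) ds)"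
    by (simp add: sum_words_sum sum_words_mult_left monodromy_fuse)
  also have "\<dots> = twisted_transfer (\<lambda>p. \<theta> (fst p) * \<theta>' (snd p)) (fuse W V) ts cs ds"
    by (simp add: twisted_transfer_def sum_UNIV_prod)
  finally show ?thesis .
qed

definition intertwines ::
  "('b \<Rightarrow> 'b' \<Rightarrow> 'r) \<Rightarrow> ('t \<Rightarrow> 'b'::finite \<Rightarrow> 'c \<Rightarrow> 'b' \<Rightarrow> 'c \<Rightarrow> 'r)
     \<Rightarrow> ('t \<Rightarrow> 'b::finite \<Rightarrow> 'c \<Rightarrow> 'b \<Rightarrow> 'c \<Rightarrow> 'r::comm_ring_1) \<Rightarrow> bool" where
  "intertwines R W V \<longleftrightarrow>
     (\<forall>t p c q d. (\<Sum>u\<in>UNIV. R p u * W t u c q d) = (\<Sum>u\<in>UNIV. V t p c u d * R u q))"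

lemma monodromy_intertwine:
  assumes "intertwines R W V"
  shows "(\<Sum>u\<in>UNIV. R a u * monodromy W ts u cs b ds) = (\<Sum>u\<in>UNIV. monodromy V ts a cs u ds * R u b)"
proof (induction ts arbitrary: cs ds b)
  case Nil
  then show ?case
    by (cases cs; cases ds)
      (simp_all add: if_distrib[of "\<lambda>x. _ * x"] if_distrib[of "\<lambda>x. x * _"] cong: if_cong)
next
  case (Cons t ts)
  show ?case
  proof (cases cs; cases ds)
    fix c cs' d ds'
    assume cs: "cs = c # cs'" and ds: "ds = d # ds'"
    have "(\<Sum>u\<in>UNIV. R a u * monodromy W (t # ts) u cs b ds)
        = (\<Sum>e\<in>UNIV. (\<Sum>u\<in>UNIV. R a u * monodromy W ts u cs' e ds') * W t e c b d)"
      by (simp only: cs ds monodromy.simps sum_distrib_left sum_distrib_right mult.assoc) (rule sum.swap)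
    also have "\<dots> = (\<Sum>e\<in>UNIV. (\<Sum>f\<in>UNIV. monodromy V ts a cs' f ds' * R f e) * W t e c b d)"
      by (simp only: Cons.IH)
    also have "\<dots> = (\<Sum>f\<in>UNIV. monodromy V ts a cs' f ds' * (\<Sum>e\<in>UNIV. R f e * W t e c b d))"
      by (simp only: sum_distrib_left sum_distrib_right mult.assoc) (rule sum.swap)
    also have "\<dots> = (\<Sum>f\<in>UNIV. monodromy V ts a cs' f ds' * (\<Sum>u\<in>UNIV. V t f c u d * R u b))"
      using assms by (simp add: intertwines_def)
    also have "\<dots> = (\<Sum>u\<in>UNIV. monodromy V (t # ts) a cs u ds * R u b)"
      by (simp only: cs ds monodromy.simps sum_distrib_left sum_distrib_right mult.assoc) (rule sum.swap)
    finally show ?thesis .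
  qed simp_all
qed

lemma twisted_trace_similar:
  fixes M N R S :: "'p::finite \<Rightarrow> 'p \<Rightarrow> 'r::comm_ring_1"
  assumes intertwine: "\<And>p q. (\<Sum>u\<in>UNIV. R p u * M u q) = (\<Sum>u\<in>UNIV. N p u * R u q)"
    and right_inverse: "\<And>p q. (\<Sum>u\<in>UNIV. R p u * S u q) = (if p = q then 1 else 0)"
    and left_inverse: "\<And>p q. (\<Sum>u\<in>UNIV. S p u * R u q) = (if p = q then 1 else 0)"
    and twist_commute: "\<And>p q. \<theta> p * R p q = R p q * \<theta> q"
  shows "(\<Sum>p\<in>UNIV. \<theta> p * M p p) = (\<Sum>p\<in>UNIV. \<theta> p * N p p)"
proof -
  have N_conj: "N p q = (\<Sum>v\<in>UNIV. (\<Sum>u\<in>UNIV. R p u * M u v) * S v q)" for p q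
  proof -
    have "N p q = (\<Sum>u\<in>UNIV. N p u * (\<Sum>v\<in>UNIV. R u v * S v q))"
      by (simp add: right_inverse if_distrib[of "\<lambda>x. _ * x"] cong: if_cong)
    also have "\<dots> = (\<Sum>v\<in>UNIV. (\<Sum>u\<in>UNIV. N p u * R u v) * S v q)"
      by (simp only: sum_distrib_left sum_distrib_right mult.assoc) (rule sum.swap)
    finally show ?thesis
      by (simp only: intertwine)
  qed
  have "(\<Sum>p\<in>UNIV. \<theta> p * N p p) = (\<Sum>p\<in>UNIV. \<Sum>v\<in>UNIV. \<Sum>u\<in>UNIV. \<theta> p * R p u * M u v * S v p)"
    by (simp only: N_conj sum_distrib_left sum_distrib_right mult.assoc)
  also have "\<dots> = (\<Sum>p\<in>UNIV. \<Sum>u\<in>UNIV. \<Sum>v\<in>UNIV. R p u * \<theta> u * M u v * S v p)"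
    by (simp only: twist_commute) (rule sum.cong[OF refl], rule sum.swap)
  also have "\<dots> = (\<Sum>u\<in>UNIV. \<Sum>p\<in>UNIV. \<Sum>v\<in>UNIV. R p u * \<theta> u * M u v * S v p)"
    by (rule sum.swap)
  also have "\<dots> = (\<Sum>u\<in>UNIV. \<Sum>v\<in>UNIV. \<Sum>p\<in>UNIV. R p u * \<theta> u * M u v * S v p)"
    by (rule sum.cong[OF refl], rule sum.swap)
  also have "\<dots> = (\<Sum>u\<in>UNIV. \<Sum>v\<in>UNIV. \<theta> u * M u v * (\<Sum>p\<in>UNIV. S v p * R p u))"
    by (simp only: sum_distrib_left mult_ac)
  also have "\<dots> = (\<Sum>p\<in>UNIV. \<theta> p * M p p)"
    by (simp add: left_inverse if_distrib[of "\<lambda>x. _ * x"] cong: if_cong)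
  finally show ?thesis ..
qed

lemma twisted_transfer_similar:
  assumes "intertwines R W V"
    and "\<And>p q. (\<Sum>u\<in>UNIV. R p u * S u q) = (if p = q then 1 else 0)"
    and "\<And>p q. (\<Sum>u\<in>UNIV. S p u * R u q) = (if p = q then 1 else 0)"
    and "\<And>p q. \<theta> p * R p q = R p q * \<theta> q"
  shows "twisted_transfer \<theta> W ts cs ds = twisted_transfer \<theta> V ts cs ds"
  unfolding twisted_transfer_def
  by (rule twisted_trace_similar[OF monodromy_intertwine[OF assms(1)] assms(2-4)])

definition transvection :: "'p \<Rightarrow> 'p \<Rightarrow> 'r::comm_ring_1 \<Rightarrow> 'p \<Rightarrow> 'p \<Rightarrow> 'r" where
  "transvection P Q s p u = (if p = u then 1 else 0) + (if p = P \<and> u = Q then s else 0)"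

lemma transvection_mult_inverse:
  fixes P Q :: "'p::finite"
  assumes "P \<noteq> Q"
  shows "(\<Sum>u\<in>UNIV. transvection P Q s p u * transvection P Q (- s) u v) = (if p = v then 1 else 0)"
  using assms
  by (simp add: transvection_def algebra_simps sum.distrib if_distrib[of "\<lambda>x. x * _"]
      if_distrib[of "\<lambda>x. _ * x"] cong: if_cong)

lemma twisted_transfer_commute:
  fixes a b :: "'b::finite"
  assumes RLL: "intertwines (transvection (a, b) (b, a) s) (fuse W V) (fuse V W)"
    and "a \<noteq> b"
  shows "sum_words (length ts) (\<lambda>ms. twisted_transfer \<theta> W ts cs ms * twisted_transfer \<theta> V ts ms ds)
       = sum_words (length ts) (\<lambda>ms. twisted_transfer \<theta> V ts cs ms * twisted_transfer \<theta> W ts ms ds)"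
proof -
  let ?\<Theta> = "\<lambda>p. \<theta> (fst p) * \<theta> (snd p)"
  have "?\<Theta> p * transvection (a, b) (b, a) s p u = transvection (a, b) (b, a) s p u * ?\<Theta> u" for p u
    by (auto simp: transvection_def mult.commute)
  then have "twisted_transfer ?\<Theta> (fuse W V) ts cs ds = twisted_transfer ?\<Theta> (fuse V W) ts cs ds"
    using transvection_mult_inverse[of "(a, b)" "(b, a)" "- s"] \<open>a \<noteq> b\<close>
    by (intro twisted_transfer_similar[OF RLL transvection_mult_inverse]) simp_all
  then show ?thesis
    by (simp only: twisted_transfer_mult)
qed

section \<open>The Lax operators\<close>

definition L_weight :: "'r::comm_ring_1 \<Rightarrow> 'r \<Rightarrow> bool \<Rightarrow> bool \<Rightarrow> bool \<Rightarrow> bool \<Rightarrow> 'r" where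
  "L_weight x t e c b d =
     [[1, 0, 0, 0], [0, x + t, 1, 0], [0, 1, 0, 0], [0, 0, 0, 1]] ! idx2 e c ! idx2 b d"

definition L'_weight :: "'r::comm_ring_1 \<Rightarrow> 'r \<Rightarrow> bool \<Rightarrow> bool \<Rightarrow> bool \<Rightarrow> bool \<Rightarrow> 'r" where
  "L'_weight x t e c b d =
     [[x - t, 0, 0, 0], [0, 1, 1, 0], [0, 1, 1, 0], [0, 0, 0, 0]] ! idx2 e c ! idx2 b d"

lemma L_weight_RLL:
  "intertwines (transvection (True, False) (False, True) (x - y))
     (fuse (L_weight x) (L_weight y)) (fuse (L_weight y) (L_weight x))"
  unfolding intertwines_def
  by (simp add: split_paired_all all_bool_eq fuse_def transvection_def L_weight_def idx2_def
      sum_UNIV_prod UNIV_bool algebra_simps)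

lemma L'_weight_RLL:
  "intertwines (transvection (False, True) (True, False) (y - x))
     (fuse (L'_weight x) (L'_weight y)) (fuse (L'_weight y) (L'_weight x))"
  unfolding intertwines_def
  by (simp add: split_paired_all all_bool_eq fuse_def transvection_def L'_weight_def idx2_def
      sum_UNIV_prod UNIV_bool algebra_simps)

lemma (in comm_ring_hom) hom_L_weight: "hom (L_weight x t e c b d) = L_weight (hom x) (hom t) e c b d"
  by (cases e; cases c; cases b; cases d) (simp_all add: L_weight_def idx2_def hom_add hom_minus)

lemma (in comm_ring_hom) hom_L'_weight: "hom (L'_weight x t e c b d) = L'_weight (hom x) (hom t) e c b d"
  by (cases e; cases c; cases b; cases d) (simp_all add: L'_weight_def idx2_def hom_add hom_minus)

lemma index_mat_of_rows_list:
  "i < length rs \<Longrightarrow> j < nc \<Longrightarrow> mat_of_rows_list nc rs $$ (i, j) = rs ! i ! j"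
  by (simp add: mat_of_rows_list_def)

lemma L_mat_entry: "L_mat t $$ (idx2 e c, idx2 b d) = L_weight [:0, 1:] [:t:] e c b d"
  unfolding L_mat_def L_weight_def by (subst index_mat_of_rows_list) (auto simp: idx2_def)

lemma L'_mat_entry: "L'_mat t $$ (idx2 e c, idx2 b d) = L'_weight [:0, 1:] [:t:] e c b d"
  unfolding L'_mat_def L'_weight_def by (subst index_mat_of_rows_list) (auto simp: idx2_def)

section \<open>Two spectral parameters\<close>

interpretation const_poly_hom: comm_ring_hom "\<lambda>c::'a::comm_ring_1. [:c:]"
  by unfold_locales (simp_all add: one_pCons mult_to_poly)

(* In 'a poly poly the outer variable plays the role of x and the inner one that of y. *)
abbreviation lift_poly :: "'a::comm_ring_1 poly \<Rightarrow> 'a poly poly" where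
  "lift_poly \<equiv> map_poly (\<lambda>c. [:c:])"

lemma coeff_lift_poly [simp]: "coeff (lift_poly p) i = [:coeff p i:]"
  by (simp add: coeff_map_poly)

lemma lift_poly_const [simp]: "lift_poly [:c:] = [:[:c:]:]"
  by (simp add: map_poly_pCons)

interpretation lift_poly_hom: comm_ring_hom "lift_poly :: 'a::comm_ring_1 poly \<Rightarrow> _"
  by unfold_locales (simp_all add: poly_eq_iff coeff_mult const_poly_hom.hom_sum mult.commute)

lemma coeff_coeff_lift_mult_const: "coeff (coeff (lift_poly a * [:b:]) i) j = coeff a i * coeff b j"
  by (simp add: mult.commute[of _ "[:b:]"])

lemma coeff_coeff_const_mult_lift: "coeff (coeff ([:a:] * lift_poly b) i) j = coeff a j * coeff b i"
  by simp

lemma map_mat_coeff_commute: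
  fixes P :: "'a::comm_ring_1 poly mat"
  assumes P: "P \<in> carrier_mat n n"
    and commute: "map_mat lift_poly P * map_mat (\<lambda>p. [:p:]) P = map_mat (\<lambda>p. [:p:]) P * map_mat lift_poly P"
  shows "map_mat (\<lambda>p. coeff p i) P * map_mat (\<lambda>p. coeff p j) P
       = map_mat (\<lambda>p. coeff p j) P * map_mat (\<lambda>p. coeff p i) P"
proof (rule eq_matI)
  fix r c
  assume "r < dim_row (map_mat (\<lambda>p. coeff p j) P * map_mat (\<lambda>p. coeff p i) P)"
    and "c < dim_col (map_mat (\<lambda>p. coeff p j) P * map_mat (\<lambda>p. coeff p i) P)"
  then have rc: "r < n" "c < n"
    using P by auto
  have "(map_mat (\<lambda>p. coeff p i) P * map_mat (\<lambda>p. coeff p j) P) $$ (r, c)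
      = coeff (coeff ((map_mat lift_poly P * map_mat (\<lambda>p. [:p:]) P) $$ (r, c)) i) j"
    using P rc by (simp add: scalar_prod_def coeff_sum coeff_coeff_lift_mult_const)
  also have "\<dots> = coeff (coeff ((map_mat (\<lambda>p. [:p:]) P * map_mat lift_poly P) $$ (r, c)) i) j"
    by (simp only: commute)
  also have "\<dots> = (map_mat (\<lambda>p. coeff p j) P * map_mat (\<lambda>p. coeff p i) P) $$ (r, c)"
    using P rc by (simp add: scalar_prod_def coeff_sum coeff_coeff_const_mult_lift mult.commute)
  finally show "(map_mat (\<lambda>p. coeff p i) P * map_mat (\<lambda>p. coeff p j) P) $$ (r, c)
      = (map_mat (\<lambda>p. coeff p j) P * map_mat (\<lambda>p. coeff p i) P) $$ (r, c)" .
qed (use P in auto)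

lemma transfer_carrier: "transfer R q ts \<in> carrier_mat (2 ^ length ts) (2 ^ length ts)"
  by (simp add: transfer_def opA_def opD_def)

lemma transfer_entry:
  assumes "r < 2 ^ length ts" and "c < 2 ^ length ts"
  shows "transfer R q ts $$ (r, c)
       = twisted_transfer (\<lambda>a. if a then [:q:] else 1) (\<lambda>t e c b d. R t $$ (idx2 e c, idx2 b d)) ts
           (state (length ts) r) (state (length ts) c)"
  using assms
  by (simp add: transfer_def opA_def opD_def twisted_transfer_def mono_eq_monodromy UNIV_bool)

lemma twisted_transfer_map:
  "twisted_transfer \<theta> W (map f ts) cs ds = twisted_transfer \<theta> (\<lambda>t. W (f t)) ts cs ds"
  by (simp add: twisted_transfer_def monodromy_map)

lemma transfer_lift_commute:
  fixes R :: "'a::comm_ring_1 \<Rightarrow> 'a poly mat"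
    and w :: "'a poly poly \<Rightarrow> 'a poly poly \<Rightarrow> bool \<Rightarrow> bool \<Rightarrow> bool \<Rightarrow> bool \<Rightarrow> 'a poly poly"
  assumes lift_entry: "\<And>t e c b d. lift_poly (R t $$ (idx2 e c, idx2 b d)) = w [:0, 1:] [:[:t:]:] e c b d"
    and const_entry: "\<And>t e c b d. [:R t $$ (idx2 e c, idx2 b d):] = w [:[:0, 1:]:] [:[:t:]:] e c b d"
    and RLL: "intertwines (transvection (a, b) (b, a) s)
      (fuse (w [:0, 1:]) (w [:[:0, 1:]:])) (fuse (w [:[:0, 1:]:]) (w [:0, 1:]))"
    and "a \<noteq> b"
  shows "map_mat lift_poly (transfer R q ts) * map_mat (\<lambda>p. [:p:]) (transfer R q ts)
       = map_mat (\<lambda>p. [:p:]) (transfer R q ts) * map_mat lift_poly (transfer R q ts)"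
proof -
  define N where "N = length ts"
  define \<theta> :: "bool \<Rightarrow> 'a poly poly" where "\<theta> = (\<lambda>a. if a then [:[:q:]:] else 1)"
  define TX where "TX = twisted_transfer \<theta> (w [:0, 1:]) (map (\<lambda>t. [:[:t:]:]) ts)"
  define TY where "TY = twisted_transfer \<theta> (w [:[:0, 1:]:]) (map (\<lambda>t. [:[:t:]:]) ts)"
  let ?T = "transfer R q ts"
  have lift_T: "lift_poly (?T $$ (r, c)) = TX (state N r) (state N c)"
    if "r < 2 ^ N" "c < 2 ^ N" for r c
    using that
    by (simp add: N_def TX_def \<theta>_def transfer_entry lift_poly_hom.hom_twisted_transfer lift_entry
        twisted_transfer_map if_distrib[of lift_poly] cong: if_cong)
  have const_T: "[:?T $$ (r, c):] = TY (state N r) (state N c)"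
    if "r < 2 ^ N" "c < 2 ^ N" for r c
    using that
    by (simp add: N_def TY_def \<theta>_def transfer_entry const_poly_hom.hom_twisted_transfer const_entry
        twisted_transfer_map if_distrib[of "\<lambda>c. [:c:]"] cong: if_cong)
  have TX_TY: "sum_words N (\<lambda>ms. TX cs ms * TY ms ds) = sum_words N (\<lambda>ms. TY cs ms * TX ms ds)"
    for cs ds
    using twisted_transfer_commute[OF RLL assms(4), where \<theta> = \<theta> and ts = "map (\<lambda>t. [:[:t:]:]) ts"]
    by (simp add: TX_def TY_def N_def)
  show ?thesis
  proof (rule eq_matI)
    fix r c
    assume "r < dim_row (map_mat (\<lambda>p. [:p:]) ?T * map_mat lift_poly ?T)"
      and "c < dim_col (map_mat (\<lambda>p. [:p:]) ?T * map_mat lift_poly ?T)"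
    then have rc: "r < 2 ^ N" "c < 2 ^ N"
      using transfer_carrier[of R q ts] by (auto simp: N_def)
    have "(map_mat lift_poly ?T * map_mat (\<lambda>p. [:p:]) ?T) $$ (r, c)
        = (\<Sum>k<2 ^ N. TX (state N r) (state N k) * TY (state N k) (state N c))"
      using rc transfer_carrier[of R q ts]
      by (simp add: N_def scalar_prod_def lift_T const_T atLeast0LessThan)
    also have "\<dots> = (\<Sum>k<2 ^ N. TY (state N r) (state N k) * TX (state N k) (state N c))"
      using TX_TY[of "state N r" "state N c"]
        sum_state_eq_sum_words[of "\<lambda>ms. TX (state N r) ms * TY ms (state N c)" N]
        sum_state_eq_sum_words[of "\<lambda>ms. TY (state N r) ms * TX ms (state N c)" N]
      by simp
    also have "\<dots> = (map_mat (\<lambda>p. [:p:]) ?T * map_mat lift_poly ?T) $$ (r, c)"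
      using rc transfer_carrier[of R q ts]
      by (simp add: N_def scalar_prod_def lift_T const_T atLeast0LessThan)
    finally show "(map_mat lift_poly ?T * map_mat (\<lambda>p. [:p:]) ?T) $$ (r, c)
        = (map_mat (\<lambda>p. [:p:]) ?T * map_mat lift_poly ?T) $$ (r, c)" .
  qed simp_all
qed

lemma transfer_coeff_commute:
  fixes R :: "'a::comm_ring_1 \<Rightarrow> 'a poly mat"
    and w :: "'a poly poly \<Rightarrow> 'a poly poly \<Rightarrow> bool \<Rightarrow> bool \<Rightarrow> bool \<Rightarrow> bool \<Rightarrow> 'a poly poly"
  assumes "\<And>t e c b d. lift_poly (R t $$ (idx2 e c, idx2 b d)) = w [:0, 1:] [:[:t:]:] e c b d"
    and "\<And>t e c b d. [:R t $$ (idx2 e c, idx2 b d):] = w [:[:0, 1:]:] [:[:t:]:] e c b d"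
    and "intertwines (transvection (a, b) (b, a) s)
      (fuse (w [:0, 1:]) (w [:[:0, 1:]:])) (fuse (w [:[:0, 1:]:]) (w [:0, 1:]))"
    and "a \<noteq> b"
  shows "transfer_coeff R q ts i * transfer_coeff R q ts j
       = transfer_coeff R q ts j * transfer_coeff R q ts i"
  unfolding transfer_coeff_def
  by (rule map_mat_coeff_commute[OF transfer_carrier transfer_lift_commute[OF assms]])

lemma lift_L_mat_entry:
  "lift_poly (L_mat t $$ (idx2 e c, idx2 b d)) = L_weight [:0, 1:] [:[:t:]:] e c b d"
  by (simp add: L_mat_entry lift_poly_hom.hom_L_weight map_poly_pCons)

lemma const_L_mat_entry:
  "[:L_mat t $$ (idx2 e c, idx2 b d):] = L_weight [:[:0, 1:]:] [:[:t:]:] e c b d"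
  by (simp add: L_mat_entry const_poly_hom.hom_L_weight)

lemma lift_L'_mat_entry:
  "lift_poly (L'_mat t $$ (idx2 e c, idx2 b d)) = L'_weight [:0, 1:] [:[:t:]:] e c b d"
  by (simp add: L'_mat_entry lift_poly_hom.hom_L'_weight map_poly_pCons)

lemma const_L'_mat_entry:
  "[:L'_mat t $$ (idx2 e c, idx2 b d):] = L'_weight [:[:0, 1:]:] [:[:t:]:] e c b d"
  by (simp add: L'_mat_entry const_poly_hom.hom_L'_weight)

theorem proposition5p3:
  fixes q :: "'a::comm_ring_1" and ts :: "'a list" and i j :: nat
  assumes "length ts \<ge> 2"
  shows "transfer_coeff L_mat q ts i * transfer_coeff L_mat q ts j
           = transfer_coeff L_mat q ts j * transfer_coeff L_mat q ts i \<and>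
         transfer_coeff L'_mat q ts i * transfer_coeff L'_mat q ts j
           = transfer_coeff L'_mat q ts j * transfer_coeff L'_mat q ts i"
  using transfer_coeff_commute[where w = L_weight,
          OF lift_L_mat_entry const_L_mat_entry L_weight_RLL]
    transfer_coeff_commute[where w = L'_weight,
          OF lift_L'_mat_entry const_L'_mat_entry L'_weight_RLL]
  by blast

end
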